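(* Fix $p\in(0,1)$. Under the Alternating Path Randomized Design with parameter $p$, for every component $\mathcal{P}_i=(v_{i,1},\dots,v_{i,k(i)+1})$ of the decomposition of the disagreement set and every $j\in\{1,\dots,k(i)\}$, \[\mathbb{P}(W_{i,j}=1)=\begin{cases}\dfrac{1-(-p)^{j-1}}{(1+p)^2}, & \text{if }\mathcal{P}_i\text{ is a cycle and } j=k(i),\\[2mm] \dfrac{p}{p+1}, & \text{otherwise.}\end{cases}\]
   Context: Setting: $2N$ agents; $\mathbb{M}^t,\mathbb{M}^c$ are one-to-one matchings (sets of unordered pairs of distinct agents, each agent in at most one pair). The disagreement set $\triangle\mathbb{M}^{(t,c)}=(\mathbb{M}^t\cup\mathbb{M}^c)\setminus(\mathbb{M}^t\cap\mathbb{M}^c)$, viewed as a graph, has connected components $\mathcal{P}_1,\dots,\mathcal{P}_m$, each of which is an alternating path or alternating cycle: a sequence of agents $(v_{i,1},\dots,v_{i,k(i)+1})$ whose consecutive pairs $e_{i,j}=(v_{i,j},v_{i,j+1})$, $j=1,\dots,k(i)$, are the edges of the component, alternating between $\mathbb{M}^t\setminus\mathbb{M}^c$ and $\mathbb{M}^c\setminus\mathbb{M}^t$; it is a cycle if $v_{i,1}=v_{i,k(i)+1}$ and a path otherwise (each component is listed in a fixed orientation and starting point). Alternating Path Randomized Design with parameter $p$: it produces indicators $W_{i,j}\in\{0,1\}$ (edge $e_{i,j}$ is realized iff $W_{i,j}=1$), independently across components $i$. Within $\mathcal{P}_i$: $\mathbb{P}(W_{i,1}=1)=p/(1+p)$;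 for $2\le j\le k(i)$ if $\mathcal{P}_i$ is a path, and for $2\le j\le k(i)-1$ if $\mathcal{P}_i$ is a cycle, conditionally on $W_{i,1},\dots,W_{i,j-1}$ we have $W_{i,j}=1$ with probability $p$ if $W_{i,j-1}=0$ and $W_{i,j}=0$ if $W_{i,j-1}=1$; if $\mathcal{P}_i$ is a cycle, the last indicator is deterministic given the others: $W_{i,k(i)}=1$ if $W_{i,1}=0$ and $W_{i,k(i)-1}=0$, and $W_{i,k(i)}=0$ otherwise. *)

theory Defs
  imports "HOL-Probability.Probability"
begin

definition matching :: "'a set \<Rightarrow> 'a set set \<Rightarrow> bool" where
  "matching V M \<longleftrightarrow>
     (\<forall>e\<in>M. \<exists>x y. e = {x, y} \<and> x \<noteq> y \<and> x \<in> V \<and> y \<in> V) \<and>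
     (\<forall>e\<in>M. \<forall>e'\<in>M. e \<noteq> e' \<longrightarrow> e \<inter> e' = {})"

definition disagreement :: "'a set set \<Rightarrow> 'a set set \<Rightarrow> 'a set set" where
  "disagreement Mt Mc = (Mt \<union> Mc) - (Mt \<inter> Mc)"

text \<open>A component is listed as a sequence of agents (v_1, ..., v_(k+1));
its edges are e_j = {v_j, v_(j+1)}. In Isabelle lists are 0-indexed, so
agent v_j is vs ! (j-1) and edge e_j is edge vs (j-1).\<close>
definition edge :: "'a list \<Rightarrow> nat \<Rightarrow> 'a set" where
  "edge vs j = {vs ! j, vs ! Suc j}"

definition walk_edges :: "'a list \<Rightarrow> 'a set set" where
  "walk_edges vs = {edge vs j | j. Suc j < length vs}"

definition comp_len :: "'a list \<Rightarrow> nat" where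
  "comp_len vs = length vs - 1"

definition is_cycle :: "'a list \<Rightarrow> bool" where
  "is_cycle vs \<longleftrightarrow> hd vs = last vs"

definition alternating_comp :: "'a set set \<Rightarrow> 'a set set \<Rightarrow> 'a list \<Rightarrow> bool" where
  "alternating_comp Mt Mc vs \<longleftrightarrow>
     length vs \<ge> 2 \<and>
     (if is_cycle vs then distinct (butlast vs) else distinct vs) \<and>
     ((\<forall>j. Suc j < length vs \<longrightarrow>
          (even j \<longrightarrow> edge vs j \<in> Mt - Mc) \<and> (odd j \<longrightarrow> edge vs j \<in> Mc - Mt)) \<or>
      (\<forall>j. Suc j < length vs \<longrightarrow>
          (even j \<longrightarrow> edge vs j \<in> Mc - Mt) \<and> (odd j \<longrightarrow> edge vs j \<in> Mt - Mc)))"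

text \<open>Ps = [P_1, ..., P_m] (0-indexed) is the decomposition of the disagreement
set into its connected components: each is an alternating path/cycle, they are
pairwise vertex-disjoint, and together their edges are exactly the disagreement set.\<close>
definition component_decomposition ::
  "'a set set \<Rightarrow> 'a set set \<Rightarrow> 'a list list \<Rightarrow> bool" where
  "component_decomposition Mt Mc Ps \<longleftrightarrow>
     (\<forall>i < length Ps. alternating_comp Mt Mc (Ps ! i)) \<and>
     (\<forall>i < length Ps. \<forall>i' < length Ps. i \<noteq> i' \<longrightarrow> set (Ps ! i) \<inter> set (Ps ! i') = {}) \<and>
     (\<Union>i < length Ps. walk_edges (Ps ! i)) = disagreement Mt Mc"

fun chain :: "real \<Rightarrow> nat \<Rightarrow> bool \<Rightarrow> bool list pmf" where
  "chain p 0 b = return_pmf []"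
| "chain p (Suc n) b =
     do { x \<leftarrow> (if b then return_pmf False else bernoulli_pmf p);
          xs \<leftarrow> chain p n x;
          return_pmf (x # xs) }"

definition path_design :: "real \<Rightarrow> nat \<Rightarrow> bool list pmf" where
  "path_design p k =
     (if k = 0 then return_pmf []
      else do { w1 \<leftarrow> bernoulli_pmf (p / (1 + p));
                ws \<leftarrow> chain p (k - 1) w1;
                return_pmf (w1 # ws) })"

definition cycle_design :: "real \<Rightarrow> nat \<Rightarrow> bool list pmf" where
  "cycle_design p k =
     do { w1 \<leftarrow> bernoulli_pmf (p / (1 + p));
          ws \<leftarrow> chain p (k - 2) w1;
          return_pmf (w1 # ws @ [\<not> w1 \<and> \<not> last (w1 # ws)]) }"

definition comp_design :: "real \<Rightarrow> 'a list \<Rightarrow> bool list pmf" where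
  "comp_design p vs =
     (if is_cycle vs then cycle_design p (comp_len vs) else path_design p (comp_len vs))"

definition apr_design :: "real \<Rightarrow> 'a list list \<Rightarrow> (nat \<Rightarrow> bool list) pmf" where
  "apr_design p Ps = Pi_pmf {..<length Ps} [] (\<lambda>i. comp_design p (Ps ! i))"

text \<open>W_{i,j} for j in 1..k(i) (component index i is 0-based).\<close>
definition W_ind :: "(nat \<Rightarrow> bool list) \<Rightarrow> nat \<Rightarrow> nat \<Rightarrow> bool" where
  "W_ind W i j = W i ! (j - 1)"

end

theory Submission
  imports Defs
begin

text \<open>Along a component the indicators form the two-state Markov chain with transition
matrix [[1 - p, p], [1, 0]]; its stationary probability of state 1 is p/(1+p) and its second
eigenvalue is -p. Started from b, the j-th later indicator is therefore 1 with probability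
p/(1+p) + (-p)^j (b - p/(1+p)). Since W_1 is drawn from the stationary law, every W_j of a path,
and every W_j with j < k of a cycle, is 1 with probability p/(1+p). The closing edge of a cycle
is realized iff W_1 = 0 and W_(k-1) = 0, which has probability
(1 - p/(1+p)) (1 - p/(1+p) + p/(1+p) (-p)^(k-2)) = (1 - (-p)^(k-1)) / (1+p)^2.\<close>

lemma measure_pmf_prob_bind:
  "measure_pmf.prob (bind_pmf M N) X = (\<integral>x. measure_pmf.prob (N x) X \<partial>M)"
  unfolding measure_pmf_bind
  by (subst measure_pmf.measure_bind[where N="count_space UNIV"])
    (auto simp: space_subprob_algebra measure_pmf.subprob_space_axioms)

lemma length_chain: "xs \<in> set_pmf (chain p n b) \<Longrightarrow> length xs = n"
  by (induction n arbitrary: b xs) (auto split: if_splits)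

lemma chain_Suc_eq_bind_map:
  "chain p (Suc n) b =
     (if b then return_pmf False else bernoulli_pmf p) \<bind> (\<lambda>x. map_pmf (Cons x) (chain p n x))"
  by (simp add: map_pmf_def)

lemma prob_chain_nth:
  assumes "0 \<le> p" "p \<le> 1" and "j \<le> n"
  shows "measure_pmf.prob (chain p n b) {xs. (b # xs) ! j} =
           p / (1 + p) + (-p) ^ j * (of_bool b - p / (1 + p))"
  using \<open>j \<le> n\<close>
proof (induction n arbitrary: b j)
  case 0
  then show ?case by simp
next
  case (Suc n)
  show ?case
  proof (cases j)
    case 0
    then show ?thesis by simp
  next
    case (Suc j')
    then have "measure_pmf.prob (chain p (Suc n) b) {xs. (b # xs) ! j} =
        (\<integral>x. measure_pmf.prob (chain p n x) {xs. (x # xs) ! j'}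
           \<partial>(if b then return_pmf False else bernoulli_pmf p))"
      unfolding chain_Suc_eq_bind_map measure_pmf_prob_bind measure_map_pmf
      by (simp add: vimage_def)
    also have "\<dots> = p / (1 + p) + (-p) ^ j * (of_bool b - p / (1 + p))"
      using Suc.IH[of j'] Suc.prems assms(1,2) \<open>j = Suc j'\<close> by (simp add: field_simps)
    finally show ?thesis .
  qed
qed

lemma prob_chain_nth_stationary:
  assumes "0 \<le> p" "p \<le> 1" and "j \<le> n"
  shows "(\<integral>b. measure_pmf.prob (chain p n b) {xs. (b # xs) ! j} \<partial>bernoulli_pmf (p / (1 + p)))
           = p / (1 + p)"
proof -
  define q t where "q = p / (1 + p)" and "t = (-p) ^ j"
  have "0 \<le> q" "q \<le> 1"
    using assms by (simp_all add: q_def)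
  then have "(\<integral>b. measure_pmf.prob (chain p n b) {xs. (b # xs) ! j} \<partial>bernoulli_pmf q) =
      (q + t * (1 - q)) * q + (q + t * (0 - q)) * (1 - q)"
    using assms by (simp add: prob_chain_nth q_def t_def)
  also have "\<dots> = q"
    by (simp add: algebra_simps)
  finally show ?thesis
    by (simp add: q_def)
qed

lemma measure_pmf_prob_cong:
  "(\<And>x. x \<in> set_pmf M \<Longrightarrow> P x \<longleftrightarrow> Q x) \<Longrightarrow>
     measure_pmf.prob M {x. P x} = measure_pmf.prob M {x. Q x}"
  by (intro measure_prob_cong_0) (auto simp: pmf_eq_0_set_pmf)

lemma prob_path_design_nth:
  assumes "0 \<le> p" "p \<le> 1" and "j < k"
  shows "measure_pmf.prob (path_design p k) {ws. ws ! j} = p / (1 + p)"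
proof -
  obtain n where k: "k = Suc n" using \<open>j < k\<close> by (cases k) auto
  have "path_design p k = bernoulli_pmf (p / (1 + p)) \<bind> (\<lambda>b. map_pmf (Cons b) (chain p n b))"
    by (simp add: path_design_def map_pmf_def k)
  then show ?thesis
    using assms prob_chain_nth_stationary[of p j n] k
    by (simp only: measure_pmf_prob_bind measure_map_pmf vimage_def mem_Collect_eq)
qed

lemma cycle_design_eq_bind_map:
  "cycle_design p k = bernoulli_pmf (p / (1 + p)) \<bind>
     (\<lambda>b. map_pmf (\<lambda>ws. b # ws @ [\<not> b \<and> \<not> last (b # ws)]) (chain p (k - 2) b))"
  by (simp add: cycle_design_def map_pmf_def)

lemma prob_cycle_design_nth:
  assumes "0 \<le> p" "p \<le> 1" and "Suc j < k"
  shows "measure_pmf.prob (cycle_design p k) {ws. ws ! j} = p / (1 + p)"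
proof -
  have nth_init: "(b # ws @ [y]) ! j = (b # ws) ! j" if "ws \<in> set_pmf (chain p (k - 2) b)" for b ws y
    using length_chain[OF that] \<open>Suc j < k\<close> nth_append_left[of j "b # ws" "[y]"] by simp
  have "measure_pmf.prob (chain p (k - 2) b) {ws. (b # ws @ [c ws]) ! j} =
          measure_pmf.prob (chain p (k - 2) b) {ws. (b # ws) ! j}" for b c
    by (intro measure_pmf_prob_cong) (simp add: nth_init)
  then show ?thesis
    using assms prob_chain_nth_stationary[of p j "k - 2"]
    unfolding cycle_design_eq_bind_map measure_pmf_prob_bind measure_map_pmf vimage_def mem_Collect_eq
    by simp
qed

lemma prob_cycle_design_last:
  assumes "0 \<le> p" "p \<le> 1" and "2 \<le> k"
  shows "measure_pmf.prob (cycle_design p k) {ws. ws ! (k - 1)} = (1 - (-p) ^ (k - 1)) / (1 + p)\<^sup>2"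
proof -
  define n where "n = k - 2"
  have k: "k - 2 = n" "k - 1 = Suc n"
    using \<open>2 \<le> k\<close> by (simp_all add: n_def)
  define q where "q = p / (1 + p)"
  have q: "0 \<le> q" "q \<le> 1"
    using assms by (simp_all add: q_def)
  have nth_last: "(b # ws @ [y]) ! Suc n = y" and last_eq_nth: "last (b # ws) = (b # ws) ! n"
    if "ws \<in> set_pmf (chain p n b)" for b ws y
    using length_chain[OF that] last_conv_nth[of "b # ws"] by (simp_all add: nth_append)
  have "measure_pmf.prob (cycle_design p k) {ws. ws ! (k - 1)} =
      (\<integral>b. measure_pmf.prob (chain p n b) {ws. \<not> b \<and> \<not> (b # ws) ! n} \<partial>bernoulli_pmf q)"
    unfolding q_def cycle_design_eq_bind_map k measure_pmf_prob_bind measure_map_pmf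
      vimage_def mem_Collect_eq
    by (intro Bochner_Integration.integral_cong refl measure_pmf_prob_cong)
      (simp only: nth_last last_eq_nth)
  also have "\<dots> = (1 - q) * (1 - measure_pmf.prob (chain p n False) {ws. (False # ws) ! n})"
    using q measure_pmf.prob_compl[of "{ws. (False # ws) ! n}" "chain p n False"]
    by (simp add: Compl_eq set_diff_eq)
  also have "\<dots> = (1 - q) * (1 - q + q * (-p) ^ n)"
    using assms prob_chain_nth[of p n n False] by (simp add: q_def)
  also have "\<dots> = (1 - (-p) ^ (k - 1)) / (1 + p)\<^sup>2"
    using assms unfolding k(2) q_def by (simp add: field_simps power2_eq_square)
  finally show ?thesis .
qed

lemma singleton_notin_matching: "matching V M \<Longrightarrow> {a} \<notin> M"
  unfolding matching_def by (metis insert_absorb insert_iff singleton_insert_inj_eq)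

text \<open>Rules out the one-edge loop [a, a], for which the formula for the closing edge fails.\<close>

lemma alternating_cycle_comp_len_ge_2:
  assumes "matching V Mt" "matching V Mc" "alternating_comp Mt Mc vs" "is_cycle vs"
  shows "2 \<le> comp_len vs"
proof (rule ccontr)
  assume "\<not> 2 \<le> comp_len vs"
  with assms(3) have "length vs = 2"
    by (auto simp: alternating_comp_def comp_len_def)
  then obtain a b where vs: "vs = [a, b]"
    by (auto simp: length_Suc_conv numeral_2_eq_2)
  with assms(4) have "edge vs 0 = {a}"
    by (simp add: is_cycle_def edge_def)
  moreover have "edge vs 0 \<in> Mt \<union> Mc"
    using assms(3) vs by (auto simp: alternating_comp_def)
  ultimately show False
    using singleton_notin_matching assms(1,2) by (metis Un_iff)
qed

lemma prob_apr_design_W_ind: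
  assumes "i < length Ps"
  shows "measure_pmf.prob (apr_design p Ps) {W. W_ind W i j} =
           measure_pmf.prob (comp_design p (Ps ! i)) {ws. ws ! (j - 1)}"
proof -
  have "measure_pmf.prob (apr_design p Ps) {W. W_ind W i j} =
      measure_pmf.prob (map_pmf (\<lambda>W. W i) (apr_design p Ps)) {ws. ws ! (j - 1)}"
    by (simp add: W_ind_def vimage_def)
  also have "map_pmf (\<lambda>W. W i) (apr_design p Ps) = comp_design p (Ps ! i)"
    unfolding apr_design_def using assms by (subst Pi_pmf_component) auto
  finally show ?thesis .
qed

theorem lemma1:
  fixes p :: real and V :: "'a set" and N :: nat
    and Mt Mc :: "'a set set" and Ps :: "'a list list" and i j :: nat
  assumes "0 < p" and "p < 1"
    and "finite V" and "card V = 2 * N"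
    and "matching V Mt" and "matching V Mc"
    and "component_decomposition Mt Mc Ps"
    and "i < length Ps"
    and "1 \<le> j" and "j \<le> comp_len (Ps ! i)"
  shows "measure_pmf.prob (apr_design p Ps) {W. W_ind W i j} =
           (if is_cycle (Ps ! i) \<and> j = comp_len (Ps ! i)
            then (1 - (- p) ^ (j - 1)) / (1 + p)\<^sup>2
            else p / (p + 1))"
proof -
  let ?k = "comp_len (Ps ! i)"
  have p: "0 \<le> p" "p \<le> 1"
    using assms(1,2) by simp_all
  have alt: "alternating_comp Mt Mc (Ps ! i)"
    using assms(7,8) by (simp add: component_decomposition_def)
  note marginal = prob_apr_design_W_ind[OF assms(8), of p j]
  consider "is_cycle (Ps ! i)" "j = ?k" | "is_cycle (Ps ! i)" "j < ?k" | "\<not> is_cycle (Ps ! i)"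
    using assms(10) by linarith
  then show ?thesis
  proof cases
    case 1
    then show ?thesis
      using marginal prob_cycle_design_last[OF p alternating_cycle_comp_len_ge_2[OF assms(5,6) alt]]
      by (simp add: comp_design_def)
  next
    case 2
    then show ?thesis
      using marginal prob_cycle_design_nth[OF p, of "j - 1"] assms(9)
      by (simp add: comp_design_def add.commute)
  next
    case 3
    then show ?thesis
      using marginal prob_path_design_nth[OF p, of "j - 1"] assms(9,10)
      by (simp add: comp_design_def add.commute)
  qed
qed

end
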